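(* Let $\omega=\frac{-1+\sqrt{-3}}{2}$ and let $\frac rs$ be a rational number in lowest terms with $s>0$. If $\mathcal{S}_{\frac rs}(-\omega)=0$, or equivalently $q^2-q+1$ divides $\mathcal{S}_{\frac rs}(q)$, then $s$ is a multiple of $6$.
   Context: Let $q$ be a formal parameter, $R_q=\begin{pmatrix} q & 1\\ 0 & 1\end{pmatrix}$, $S_q=\begin{pmatrix} 0 & -q^{-1}\\ 1 & 0\end{pmatrix}$, and for integers $c_1,\dots,c_k$ put $M_q(c_1,\dots,c_k)=R_q^{c_1}S_q\cdots R_q^{c_k}S_q$. Every irreducible fraction $\frac{r}{s}>1$ has a unique negative continued fraction expansion $\frac{r}{s}=c_1-\cfrac{1}{c_2-\cfrac{1}{\ddots-\cfrac{1}{c_k}}}$ with all $c_i\ge 2$; define $\mathcal{S}_{\frac rs}(q)$ as the $(2,1)$-entry of $M_q(c_1,\dots,c_k)$. For an arbitrary rational $x$, define $\mathcal{S}_x(q):=\mathcal{S}_{x+m}(q)$ for any integer $m$ with $x+m>1$ (independent of $m$). Thus $\mathcal{S}_x(q)\in\mathbb{Z}[q]$ is the denominator of the $q$-deformed rational $[x]_q$, with $\mathcal{S}_x(0)=1$, and $\mathcal{S}_{\frac rs}(1)=s$. *)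

theory Defs
  imports Complex_Main
begin

text \<open>2x2 matrices over a field, written as tuples (a,b,c,d) = [[a,b],[c,d]].\<close>
type_synonym 'a mat2 = "'a \<times> 'a \<times> 'a \<times> 'a"

fun mmul :: "'a::field mat2 \<Rightarrow> 'a mat2 \<Rightarrow> 'a mat2" where
  "mmul (a,b,c,d) (e,f,g,h) = (a*e+b*g, a*f+b*h, c*e+d*g, c*f+d*h)"

definition mid :: "'a::field mat2" where "mid = (1,0,0,1)"

fun mpow :: "'a::field mat2 \<Rightarrow> nat \<Rightarrow> 'a mat2" where
  "mpow M 0 = mid"
| "mpow M (Suc n) = mmul (mpow M n) M"

fun entry21 :: "'a mat2 \<Rightarrow> 'a" where
  "entry21 (a,b,c,d) = c"

definition Rq :: "'a::field \<Rightarrow> 'a mat2" where "Rq q = (q, 1, 0, 1)"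
definition Sq :: "'a::field \<Rightarrow> 'a mat2" where "Sq q = (0, - inverse q, 1, 0)"

fun Mq :: "'a::field \<Rightarrow> int list \<Rightarrow> 'a mat2" where
  "Mq q [] = mid"
| "Mq q (c # cs) = mmul (mmul (mpow (Rq q) (nat c)) (Sq q)) (Mq q cs)"

fun negcf :: "int list \<Rightarrow> rat" where
  "negcf [] = 0"
| "negcf [c] = of_int c"
| "negcf (c # cs) = of_int c - 1 / negcf cs"

definition hj_expansion :: "rat \<Rightarrow> int list" where
  "hj_expansion x = (THE cs. cs \<noteq> [] \<and> (\<forall>c\<in>set cs. c \<ge> 2) \<and> negcf cs = x)"

definition S_gt1 :: "'a::field \<Rightarrow> rat \<Rightarrow> 'a" where
  "S_gt1 q x = entry21 (Mq q (hj_expansion x))"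

text \<open>S_x(q) for arbitrary rational x: shift by the integer m = 2 - floor x, so x + m > 1.\<close>
definition S_rat :: "'a::field \<Rightarrow> rat \<Rightarrow> 'a" where
  "S_rat q x = S_gt1 q (x + of_int (2 - \<lfloor>x\<rfloor>))"

definition omega :: complex where "omega = Complex (-1/2) (sqrt 3 / 2)"

end

theory Submission
  imports Defs
begin

text \<open>Put q = -omega, so that q^2 = q - 1 and the first column (v0, v1) of M_q(c_1, ..., c_k)
  has entries in the Eisenstein integers Z[q]. Reducing modulo 2 (where q becomes a primitive
  cube root of unity in F_4) and modulo q + 1 (where q becomes -1 in F_3), the matrices R_q and
  S_q fix one point of the projective line, and on the remaining points they act exactly as
  R_1 and S_1 act on P^1(F_3) and on P^1(F_2) respectively. The first column of M_1 is (r, s).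
  Following both columns along the product, v1 = 0 means that (v0, v1) reduces to the point
  [1 : 0] in both projective lines, which forces s = 0 modulo 3 and modulo 2.\<close>

fun mv :: "'a::field mat2 \<Rightarrow> 'a \<times> 'a \<Rightarrow> 'a \<times> 'a" where
  "mv (a, b, c, d) (x, y) = (a * x + b * y, c * x + d * y)"

lemma mv_mmul: "mv (mmul A B) v = mv A (mv B v)"
  by (cases A; cases B; cases v) (simp add: algebra_simps)

lemma mv_mid [simp]: "mv mid v = v"
  by (cases v) (simp add: mid_def)

lemma mv_mpow_Suc: "mv (mpow M (Suc n)) v = mv (mpow M n) (mv M v)"
  by (simp add: mv_mmul)

lemma mv_Mq_Cons:
  "mv (Mq q (c # cs)) v = mv (mpow (Rq q) (nat c)) (mv (Sq q) (mv (Mq q cs) v))"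
  by (simp add: mv_mmul)

lemma entry21_eq_snd_mv: "entry21 M = snd (mv M (1, 0))"
  by (cases M) simp

definition hj_admissible :: "int list \<Rightarrow> bool" where
  "hj_admissible cs \<longleftrightarrow> cs \<noteq> [] \<and> (\<forall>c\<in>set cs. c \<ge> 2)"

lemma hj_admissible_Cons:
  "hj_admissible (c # cs) \<longleftrightarrow> c \<ge> 2 \<and> (cs = [] \<or> hj_admissible cs)"
  by (auto simp: hj_admissible_def)

lemma negcf_Cons: "negcf (c # cs) = of_int c - 1 / negcf cs"
  by (cases cs) auto

lemma negcf_gt_1: "hj_admissible cs \<Longrightarrow> negcf cs > 1"
proof (induction cs)
  case (Cons c cs)
  show ?case
  proof (cases "cs = []")
    case False
    with Cons have "1 / negcf cs < 1"
      by (simp add: hj_admissible_Cons)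
    with Cons.prems show ?thesis
      by (simp add: hj_admissible_Cons negcf_Cons)
  qed (use Cons.prems in \<open>simp add: hj_admissible_Cons\<close>)
qed (simp add: hj_admissible_def)

lemma negcf_Cons_bounds:
  assumes "hj_admissible cs"
  shows "of_int c - 1 < negcf (c # cs)" and "negcf (c # cs) < of_int c"
proof -
  have "0 < 1 / negcf cs" "1 / negcf cs < 1"
    using negcf_gt_1[OF assms] by simp_all
  then show "of_int c - 1 < negcf (c # cs)" "negcf (c # cs) < of_int c"
    by (simp_all add: negcf_Cons)
qed

lemma ceiling_negcf: "hj_admissible (c # cs) \<Longrightarrow> \<lceil>negcf (c # cs)\<rceil> = c"
  using negcf_Cons_bounds[of cs c]
  by (cases "cs = []") (auto simp: hj_admissible_Cons ceiling_eq_iff)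

lemma negcf_in_Ints_iff: "hj_admissible (c # cs) \<Longrightarrow> negcf (c # cs) \<in> \<int> \<longleftrightarrow> cs = []"
proof
  assume "hj_admissible (c # cs)" "negcf (c # cs) \<in> \<int>"
  then show "cs = []"
    using negcf_Cons_bounds[of cs c] by (auto simp: hj_admissible_Cons elim!: Ints_cases)
qed simp

lemma negcf_inj:
  "hj_admissible cs \<Longrightarrow> hj_admissible ds \<Longrightarrow> negcf cs = negcf ds \<Longrightarrow> cs = ds"
proof (induction cs arbitrary: ds)
  case (Cons c cs)
  obtain d ds' where ds: "ds = d # ds'"
    using Cons.prems(2) by (cases ds) (auto simp: hj_admissible_def)
  have "c = d"
    using Cons.prems ceiling_negcf ds by metis
  show ?case
  proof (cases "cs = []")
    case True
    then show ?thesis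
      using Cons.prems negcf_in_Ints_iff ds \<open>c = d\<close> by metis
  next
    case False
    then have "ds' \<noteq> []"
      using Cons.prems negcf_in_Ints_iff ds by metis
    have "negcf cs = negcf ds'"
      using Cons.prems(3) ds \<open>c = d\<close> by (simp add: negcf_Cons)
    then show ?thesis
      using Cons False \<open>ds' \<noteq> []\<close> ds \<open>c = d\<close> by (auto simp: hj_admissible_Cons)
  qed
qed (simp add: hj_admissible_def)

text \<open>The first column of M_1(c_1, ..., c_k) over the integers (R_1 maps (a, c) to (a + c, c)
  and S_1 maps it to (-c, a)).\<close>

fun int_column :: "int list \<Rightarrow> int \<times> int" where
  "int_column [] = (1, 0)"
| "int_column (c # cs) = (case int_column cs of (p, t) \<Rightarrow> (c * p - t, p))"

text \<open>Euclid-type recursion: r/s = c - t/s with c = floor(r/s) + 1 and 0 < t < s, then recurse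
  on s/t.\<close>

lemma hj_expansion_exists:
  "0 < s \<Longrightarrow> s < r \<Longrightarrow> coprime r s \<Longrightarrow>
     \<exists>cs. hj_admissible cs \<and> negcf cs = of_int r / of_int s \<and> int_column cs = (r, s)"
proof (induction "nat s" arbitrary: r s rule: less_induct)
  case less
  show ?case
  proof (cases "s dvd r")
    case True
    then have "s = 1"
      using less.prems by auto
    then show ?thesis
      using less.prems by (intro exI[of _ "[r]"]) (simp add: hj_admissible_def)
  next
    case False
    define c where "c = r div s + 1"
    define t where "t = c * s - r"
    have "0 < t" "t < s"
      using False less.prems(1) unfolding t_def c_def
      by (simp_all add: minus_mod_eq_mult_div [symmetric] algebra_simps dvd_eq_mod_eq_0
          order_le_neq_trans)
    have "0 < r div s"
      using less.prems(1,2) by (simp add: pos_imp_zdiv_pos_iff)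
    then have "c \<ge> 2"
      by (simp add: c_def)
    have "coprime s t"
      using less.prems(3) gcd_add_mult[of s c "- r"] unfolding t_def
      by (simp add: coprime_iff_gcd_eq_1 gcd.commute)
    then obtain ds where ds: "hj_admissible ds" "negcf ds = of_int s / of_int t"
      "int_column ds = (s, t)"
      using less.hyps[of t s] \<open>0 < t\<close> \<open>t < s\<close> by auto
    have "negcf (c # ds) = of_int r / of_int s"
      using ds(2) less.prems(1) by (simp add: negcf_Cons t_def field_simps)
    moreover have "int_column (c # ds) = (r, s)"
      using ds(3) by (simp add: t_def)
    ultimately show ?thesis
      using ds(1) \<open>c \<ge> 2\<close> by (intro exI[of _ "c # ds"]) (simp add: hj_admissible_Cons)
  qed
qed

lemma hj_expansion_of_int_div:
  assumes "0 < s" "s < r" "coprime r s"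
  shows "hj_admissible (hj_expansion (of_int r / of_int s))"
    and "int_column (hj_expansion (of_int r / of_int s)) = (r, s)"
proof -
  obtain cs where cs: "hj_admissible cs" "negcf cs = of_int r / of_int s" "int_column cs = (r, s)"
    using hj_expansion_exists[OF assms] by blast
  have "hj_expansion (of_int r / of_int s) = cs"
    unfolding hj_expansion_def
    using cs negcf_inj by (intro the_equality) (auto simp: hj_admissible_def)
  then show "hj_admissible (hj_expansion (of_int r / of_int s))"
    and "int_column (hj_expansion (of_int r / of_int s)) = (r, s)"
    using cs by simp_all
qed

lemma omega_square: "omega\<^sup>2 = - omega - 1"
proof -
  have "sqrt 3 * sqrt 3 = (3::real)"
    by simp
  then show ?thesis
    by (simp add: omega_def complex_eq_iff power2_eq_square algebra_simps)
qed

lemma inverse_omega: "inverse omega = - omega - 1"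
  using omega_square by (intro inverse_unique) algebra

definition eis :: "int \<Rightarrow> int \<Rightarrow> complex" where
  "eis x y = of_int x + of_int y * - omega"

lemma eis_eq_0_iff: "eis x y = 0 \<longleftrightarrow> x = 0 \<and> y = 0"
proof
  assume "eis x y = 0"
  then have "Im (eis x y) = 0" and "Re (eis x y) = 0"
    by simp_all
  then show "x = 0 \<and> y = 0"
    by (simp add: eis_def omega_def)
qed (simp add: eis_def)

lemma mv_Rq_eis:
  "mv (Rq (- omega)) (eis x0 y0, eis x1 y1) = (eis (x1 - y0) (x0 + y0 + y1), eis x1 y1)"
  using omega_square
  by (simp add: Rq_def eis_def) algebra

lemma mv_Sq_eis:
  "mv (Sq (- omega)) (eis x0 y0, eis x1 y1) = (eis (- x1 - y1) x1, eis x0 y0)"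
  using omega_square
  by (simp add: Sq_def inverse_omega eis_def) algebra

text \<open>Modulo 2, q = -omega becomes a primitive cube root of unity of F_4, and
  v1 - q v0 = (x1 + y0) + (y1 - x0 - y0) q. The nonzero reduction of (v0, v1) lies on one of the
  lines v1 = 0, v0 = 0, v0 = v1, v1 = q v0 of F_4^2, matched with the points c = 0, a = 0, a = c,
  a = -c of P^1(F_3); the fifth line v1 = q^2 v0 is invariant and never reached.\<close>

definition corresp_mod2 :: "int \<Rightarrow> int \<Rightarrow> int \<Rightarrow> int \<Rightarrow> int \<Rightarrow> int \<Rightarrow> bool" where
  "corresp_mod2 x0 y0 x1 y1 a c \<longleftrightarrow> \<not> (even x0 \<and> even y0 \<and> even x1 \<and> even y1) \<and>
     (even x1 \<and> even y1 \<and> 3 dvd c \<or>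
      even x0 \<and> even y0 \<and> 3 dvd a \<or>
      even (x0 - x1) \<and> even (y0 - y1) \<and> 3 dvd (a - c) \<or>
      even (x1 + y0) \<and> even (y1 - x0 - y0) \<and> 3 dvd (a + c))"

text \<open>Modulo q + 1, x + y q becomes x - y in F_3. The lines v1 = 0, v0 = 0, v0 = v1 of F_3^2
  are matched with the points of P^1(F_2); the fourth line v0 = -v1 is invariant.\<close>

definition corresp_mod3 :: "int \<Rightarrow> int \<Rightarrow> int \<Rightarrow> int \<Rightarrow> int \<Rightarrow> int \<Rightarrow> bool" where
  "corresp_mod3 x0 y0 x1 y1 a c \<longleftrightarrow> \<not> (3 dvd (x0 - y0) \<and> 3 dvd (x1 - y1)) \<and>
     (3 dvd (x1 - y1) \<and> even c \<or>
      3 dvd (x0 - y0) \<and> even a \<or>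
      3 dvd ((x0 - y0) - (x1 - y1)) \<and> even (a - c))"

lemma corresp_mod2_R:
  "corresp_mod2 x0 y0 x1 y1 a c \<Longrightarrow> corresp_mod2 (x1 - y0) (x0 + y0 + y1) x1 y1 (a + c) c"
  unfolding corresp_mod2_def by presburger

lemma corresp_mod2_S:
  "corresp_mod2 x0 y0 x1 y1 a c \<Longrightarrow> corresp_mod2 (- x1 - y1) x1 x0 y0 (- c) a"
  unfolding corresp_mod2_def by presburger

lemma corresp_mod3_R:
  "corresp_mod3 x0 y0 x1 y1 a c \<Longrightarrow> corresp_mod3 (x1 - y0) (x0 + y0 + y1) x1 y1 (a + c) c"
  unfolding corresp_mod3_def by presburger

lemma corresp_mod3_S:
  "corresp_mod3 x0 y0 x1 y1 a c \<Longrightarrow> corresp_mod3 (- x1 - y1) x1 x0 y0 (- c) a"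
  unfolding corresp_mod3_def by presburger

lemma corresp_6_dvd: "corresp_mod2 x0 y0 0 0 a c \<Longrightarrow> corresp_mod3 x0 y0 0 0 a c \<Longrightarrow> 6 dvd c"
  unfolding corresp_mod2_def corresp_mod3_def by presburger

fun column_match :: "complex \<times> complex \<Rightarrow> int \<times> int \<Rightarrow> bool" where
  "column_match v (a, c) \<longleftrightarrow> (\<exists>x0 y0 x1 y1. v = (eis x0 y0, eis x1 y1) \<and>
     corresp_mod2 x0 y0 x1 y1 a c \<and> corresp_mod3 x0 y0 x1 y1 a c)"

lemma column_match_Rq:
  "column_match v (a, c) \<Longrightarrow> column_match (mv (Rq (- omega)) v) (a + c, c)"
  by (auto simp: mv_Rq_eis) (blast intro: corresp_mod2_R corresp_mod3_R)

lemma column_match_Sq: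
  "column_match v (a, c) \<Longrightarrow> column_match (mv (Sq (- omega)) v) (- c, a)"
  by (auto simp: mv_Sq_eis) (blast intro: corresp_mod2_S corresp_mod3_S)

lemma column_match_Rq_pow:
  "column_match v (a, c) \<Longrightarrow> column_match (mv (mpow (Rq (- omega)) n) v) (a + int n * c, c)"
proof (induction n arbitrary: v a)
  case (Suc n)
  then have "column_match (mv (mpow (Rq (- omega)) n) (mv (Rq (- omega)) v)) (a + c + int n * c, c)"
    using column_match_Rq by blast
  moreover have "a + c + int n * c = a + int (Suc n) * c"
    by (simp add: algebra_simps)
  ultimately show ?case
    by (simp only: mv_mpow_Suc)
qed simp

lemma column_match_Mq:
  "\<forall>c\<in>set cs. 0 \<le> c \<Longrightarrow> column_match (mv (Mq (- omega) cs) (1, 0)) (int_column cs)"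
proof (induction cs)
  case Nil
  have "column_match (eis 1 0, eis 0 0) (1, 0)"
    unfolding column_match.simps
    by (intro exI conjI refl) (unfold corresp_mod2_def corresp_mod3_def, presburger+)
  then show ?case
    by (simp add: eis_def)
next
  case (Cons c cs)
  obtain p t where pt: "int_column cs = (p, t)"
    by fastforce
  then have "column_match (mv (Sq (- omega)) (mv (Mq (- omega) cs) (1, 0))) (- t, p)"
    using Cons column_match_Sq by simp
  then have "column_match (mv (Mq (- omega) (c # cs)) (1, 0)) (- t + int (nat c) * p, p)"
    unfolding mv_Mq_Cons by (rule column_match_Rq_pow)
  moreover have "- t + int (nat c) * p = c * p - t"
    using Cons.prems by simp
  ultimately show ?case
    by (simp only: int_column.simps pt prod.case)
qed

lemma column_match_6_dvd: "column_match v (a, c) \<Longrightarrow> snd v = 0 \<Longrightarrow> 6 dvd c"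
  by (auto simp: eis_eq_0_iff intro: corresp_6_dvd)

lemma S_rat_of_int_div:
  fixes r s :: int
  assumes "0 < s" and "coprime r s"
  obtains R where "s < R" and "coprime R s"
    and "S_rat q (of_int r / of_int s) = S_gt1 q (of_int R / of_int s)"
proof
  define R where "R = r + (2 - r div s) * s"
  have "R = r mod s + 2 * s"
    by (simp add: R_def minus_mod_eq_mult_div [symmetric] algebra_simps)
  then show "s < R"
    using assms(1) pos_mod_sign[of s r] by linarith
  show "coprime R s"
    using assms(2) gcd_add_mult[of s "2 - r div s" r]
    by (simp add: R_def coprime_iff_gcd_eq_1 gcd.commute add.commute)
  have "of_int r / of_int s + of_int (2 - \<lfloor>of_int r / of_int s :: rat\<rfloor>)
      = (of_int R / of_int s :: rat)"
    using assms(1) by (simp add: R_def floor_divide_of_int_eq field_simps)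
  then show "S_rat q (of_int r / of_int s) = S_gt1 q (of_int R / of_int s)"
    by (simp only: S_rat_def)
qed

theorem proposition5p3:
  fixes r s :: int
  assumes "s > 0" and "coprime r s"
    and "S_rat (- omega) (of_int r / of_int s) = 0"
  shows "6 dvd s"
proof -
  obtain R where "s < R" and "coprime R s"
    and S: "S_rat (- omega) (of_int r / of_int s) = S_gt1 (- omega) (of_int R / of_int s)"
    using S_rat_of_int_div[OF assms(1,2)] by blast
  define cs where "cs = hj_expansion (of_int R / of_int s)"
  have "\<forall>c\<in>set cs. 0 \<le> c" and "int_column cs = (R, s)"
    using hj_expansion_of_int_div[OF assms(1) \<open>s < R\<close> \<open>coprime R s\<close>]
    by (auto simp: cs_def hj_admissible_def)
  moreover have "snd (mv (Mq (- omega) cs) (1, 0)) = 0"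
    using assms(3) by (simp add: S S_gt1_def entry21_eq_snd_mv cs_def)
  ultimately show ?thesis
    using column_match_Mq column_match_6_dvd by metis
qed

end
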